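(* Let $\mathcal I$ be an inference family on a finite hypergraph $H=(V,F)$, let $\boldsymbol\eta\in L$ with pseudomarginals $b_\alpha,b_i$, and for $\alpha\in F$ and distinct $i,j\in\alpha$ let $u^\alpha_{i\to j}=\mathrm{Var}_{b_j}(\phi_j)^{-1}\mathrm{Cov}_{b_\alpha}(\phi_j,\phi_i)$ and $$c^\alpha_{i\to j}:=\mathrm{Var}_{b_\alpha}(\phi_j)^{-1/2}\mathrm{Cov}_{b_\alpha}(\phi_j,\phi_i)\mathrm{Var}_{b_\alpha}(\phi_i)^{-1/2}.$$ Then $\mathcal M(\boldsymbol u)$ and $\mathcal M(\boldsymbol c)$ have the same set of eigenvalues.
   Context: Hypergraph notation: directed edges $\vec E=\{(\alpha\to i):i\in\alpha\in F\}$ with $s(\alpha\to i)=\alpha$, $t(\alpha\to i)=i$; $e'\rightharpoonup e$ means $t(e')\in s(e)$, $t(e')\ne t(e)$, $s(e')\ne s(e)$. For weights $\boldsymbol v=\{v^\alpha_{i\to j}\}$ with $v^\alpha_{i\to j}\in\mathbb{C}^{r_j\times r_i}$, $\mathcal M(\boldsymbol v)$ acts on $\bigoplus_{e}\mathbb{C}^{r_{t(e)}}$ by $(\mathcal M(\boldsymbol v)f)(e)=\sum_{e':e'\rightharpoonup e}v^{s(e)}_{t(e')\to t(e)}f(e')$. Inference family: exponential families $\mathcal E_i$ (statistic $\phi_i\in\mathbb{R}^{r_i}$) and $\mathcal E_\alpha$ on $\prod_{i\in\alpha}\mathcal X_i$ (statistic $(\bar\phi_\alpha,(\phi_i)_{i\in\alpha})$),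 with invertible covariance matrices and marginals of $\mathcal E_\alpha$ onto $x_i$ lying in $\mathcal E_i$. $L$ is the set of expectation parameters $((\eta_\alpha)_\alpha,(\eta_i)_i)$ with $\eta^\alpha_i=\eta_i$ for all $i\in\alpha$ (local consistency), identified with pseudomarginals $b_\alpha\in\mathcal E_\alpha$, $b_i\in\mathcal E_i$; in particular $b_i$ is the $x_i$-marginal of $b_\alpha$. *)

theory Defs
  imports "HOL-Probability.Probability" "Jordan_Normal_Form.Matrix"
begin

definition mat_inv :: "real mat \<Rightarrow> real mat" where
  "mat_inv A = (THE B. B \<in> carrier_mat (dim_row A) (dim_row A) \<and>
                       A * B = 1\<^sub>m (dim_row A) \<and> B * A = 1\<^sub>m (dim_row A))"

definition psd_sqrt :: "real mat \<Rightarrow> real mat" where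
  "psd_sqrt A = (THE B. B \<in> carrier_mat (dim_row A) (dim_row A) \<and> transpose_mat B = B \<and>
        (\<forall>v \<in> carrier_vec (dim_row A). v \<bullet> (B *\<^sub>v v) \<ge> 0) \<and> B * B = A)"

definition inv_sqrt :: "real mat \<Rightarrow> real mat" where
  "inv_sqrt A = mat_inv (psd_sqrt A)"

text \<open>\<open>Cov_b(f,g)\<close> for vector statistics \<open>f\<close> (dimension m) and \<open>g\<close> (dimension n):
  the m x n matrix \<open>E[f g^T] - E[f] E[g]^T\<close>.  \<open>Var_b(f) = Cov_b(f,f)\<close>.\<close>
definition cov_mat :: "'a measure \<Rightarrow> ('a \<Rightarrow> real vec) \<Rightarrow> nat \<Rightarrow> ('a \<Rightarrow> real vec) \<Rightarrow> nat \<Rightarrow> real mat" where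
  "cov_mat b f m g n = mat m n (\<lambda>(k,l).
      (\<integral>x. f x $ k * g x $ l \<partial>b) - (\<integral>x. f x $ k \<partial>b) * (\<integral>x. g x $ l \<partial>b))"

definition in_expfam :: "'a measure \<Rightarrow> ('a \<Rightarrow> real vec) \<Rightarrow> nat \<Rightarrow> 'a measure \<Rightarrow> bool" where
  "in_expfam \<nu> \<phi> d b \<longleftrightarrow> prob_space b \<and>
     (\<exists>\<theta> \<in> carrier_vec d. \<exists>c::real. b = density \<nu> (\<lambda>x. ennreal (exp (\<theta> \<bullet> \<phi> x - c))))"

definition in_expfam_factor ::
  "('v \<Rightarrow> 'x) measure \<Rightarrow> (('v \<Rightarrow> 'x) \<Rightarrow> real vec) \<Rightarrow> nat \<Rightarrow> 'v set \<Rightarrow>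
   ('v \<Rightarrow> 'x \<Rightarrow> real vec) \<Rightarrow> ('v \<Rightarrow> nat) \<Rightarrow> ('v \<Rightarrow> 'x) measure \<Rightarrow> bool" where
  "in_expfam_factor \<nu> \<phi>bar s \<alpha> \<phi> r b \<longleftrightarrow> prob_space b \<and>
     (\<exists>\<theta>0 \<in> carrier_vec s. \<exists>\<theta>. (\<forall>i\<in>\<alpha>. \<theta> i \<in> carrier_vec (r i)) \<and> (\<exists>c::real.
        b = density \<nu> (\<lambda>x. ennreal (exp (\<theta>0 \<bullet> \<phi>bar x + (\<Sum>i\<in>\<alpha>. \<theta> i \<bullet> \<phi> i (x i)) - c)))))"

text \<open>Directed edges \<open>(\<alpha> \<rightarrow> i)\<close>, encoded as pairs \<open>(\<alpha>, i)\<close>; \<open>s = fst\<close>, \<open>t = snd\<close>.\<close>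
definition dedges :: "'v set set \<Rightarrow> ('v set \<times> 'v) set" where
  "dedges F = {(\<alpha>, i). \<alpha> \<in> F \<and> i \<in> \<alpha>}"

definition feeds :: "('v set \<times> 'v) \<Rightarrow> ('v set \<times> 'v) \<Rightarrow> bool" where
  "feeds e' e \<longleftrightarrow> snd e' \<in> fst e \<and> snd e' \<noteq> snd e \<and> fst e' \<noteq> fst e"

text \<open>\<open>(\<M>(w) f)(e) = \<Sum>_{e' \<rightharpoonup> e} w^{s(e)}_{t(e') \<rightarrow> t(e)} f(e')\<close>, with
  \<open>w \<alpha> i j\<close> the \<open>r_j \<times> r_i\<close> matrix \<open>w^\<alpha>_{i\<rightarrow>j}\<close>, and \<open>f e \<in> \<complex>^{r_{t(e)}}\<close>.\<close>
definition M_op :: "'v set set \<Rightarrow> ('v \<Rightarrow> nat) \<Rightarrow> ('v set \<Rightarrow> 'v \<Rightarrow> 'v \<Rightarrow> complex mat) \<Rightarrow>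
    ('v set \<times> 'v \<Rightarrow> complex vec) \<Rightarrow> ('v set \<times> 'v) \<Rightarrow> complex vec" where
  "M_op F r w f e = vec (r (snd e)) (\<lambda>k.
      \<Sum>e' \<in> {e' \<in> dedges F. feeds e' e}. (w (fst e) (snd e') (snd e) *\<^sub>v f e') $ k)"

definition M_eigenvalue :: "'v set set \<Rightarrow> ('v \<Rightarrow> nat) \<Rightarrow> ('v set \<Rightarrow> 'v \<Rightarrow> 'v \<Rightarrow> complex mat) \<Rightarrow>
    complex \<Rightarrow> bool" where
  "M_eigenvalue F r w z \<longleftrightarrow> (\<exists>f.
      (\<forall>e \<in> dedges F. f e \<in> carrier_vec (r (snd e))) \<and>
      (\<exists>e \<in> dedges F. f e \<noteq> 0\<^sub>v (r (snd e))) \<and>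
      (\<forall>e \<in> dedges F. M_op F r w f e = z \<cdot>\<^sub>v f e))"

end

theory Submission
  imports Defs "Jordan_Normal_Form.Char_Poly" "HOL-Computational_Algebra.Fundamental_Theorem_Algebra"
begin

text \<open>Write \<open>A_i = Var_{b_i}(\<phi>_i)\<close> and \<open>S_i = A_i^{1/2}\<close>. Local consistency makes
  \<open>Var_{b_\<alpha>}(\<phi>_i) = A_i\<close>, so with \<open>C = Cov_{b_\<alpha>}(\<phi>_j,\<phi>_i)\<close> we have
  \<open>u^\<alpha>_{i\<rightarrow>j} = S_j^{-2} C\<close> and \<open>c^\<alpha>_{i\<rightarrow>j} = S_j^{-1} C S_i^{-1}\<close>, i.e.
  \<open>c^\<alpha>_{i\<rightarrow>j} S_i = S_j u^\<alpha>_{i\<rightarrow>j}\<close>. Hence \<open>\<M>(c) = D \<M>(u) D^{-1}\<close> for the block diagonal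
  operator \<open>D\<close> acting by \<open>S_{t(e)}\<close> on the edge \<open>e\<close>, and similar operators have the same
  eigenvalues. That the square root in \<open>c\<close> is well defined rests on existence and uniqueness of
  positive semidefinite square roots, which we derive from the spectral theorem for real symmetric
  matrices (proved by Householder deflation).\<close>

section \<open>The spectral theorem for real symmetric matrices\<close>

lemma scalar_prod_self_nonneg: "0 \<le> (v :: real vec) \<bullet> v"
  using conjugate_square_ge_0_vec[of v] by simp

lemma scalar_prod_self_eq_0_iff: "(v :: real vec) \<in> carrier_vec n \<Longrightarrow> v \<bullet> v = 0 \<longleftrightarrow> v = 0\<^sub>v n"
  using conjugate_square_eq_0_vec[of v n] by simp

text \<open>The Rayleigh quotient \<open>v\<^sup>* A v / v\<^sup>* v\<close> of a complex eigenvector is real, so the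
  complex eigenvalue given by the fundamental theorem of algebra is a root of the real
  characteristic polynomial.\<close>

lemma real_symmetric_mat_has_eigenvalue:
  fixes A :: "real mat"
  assumes A: "A \<in> carrier_mat n n" and sym: "transpose_mat A = A" and n: "n > 0"
  shows "\<exists>e. eigenvalue A e"
proof -
  let ?Ac = "map_mat complex_of_real A"
  have Ac: "?Ac \<in> carrier_mat n n" using A by auto
  have cp: "char_poly ?Ac = map_poly of_real (char_poly A)"
    using of_real_hom.char_poly_hom[OF A] by simp
  have "degree (char_poly ?Ac) = n" using degree_monic_char_poly[OF Ac] by simp
  hence "\<not> constant (poly (char_poly ?Ac))" using n constant_degree by (metis less_not_refl)
  then obtain z where z: "poly (char_poly ?Ac) z = 0" using fundamental_theorem_of_algebra by blast
  hence "eigenvalue ?Ac z" using eigenvalue_root_char_poly[OF Ac] by simp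
  then obtain v where "eigenvector ?Ac v z" unfolding eigenvalue_def by blast
  hence v: "v \<in> carrier_vec n" "v \<noteq> 0\<^sub>v n" and Av: "?Ac *\<^sub>v v = z \<cdot>\<^sub>v v"
    using Ac unfolding eigenvector_def by auto
  define s where "s = (\<Sum>k<n. cnj (v$k) * (?Ac *\<^sub>v v) $ k)"
  define N where "N = (\<Sum>k<n. cnj (v$k) * v$k)"
  have s_eq: "s = z * N" unfolding s_def N_def Av using v by (simp add: sum_distrib_left ac_simps)
  have s_entries: "s = (\<Sum>k<n. \<Sum>l<n. cnj (v$k) * of_real (A$$(k,l)) * v$l)"
    unfolding s_def using A v by (simp add: scalar_prod_def sum_distrib_left ac_simps atLeast0LessThan)
  have symA: "A$$(k,l) = A$$(l,k)" if "k < n" "l < n" for k l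
    using sym A that by (metis index_transpose_mat(1) carrier_matD)
  have "cnj s = (\<Sum>k<n. \<Sum>l<n. v$k * of_real (A$$(k,l)) * cnj (v$l))" unfolding s_entries by simp
  also have "\<dots> = (\<Sum>l<n. \<Sum>k<n. v$k * of_real (A$$(k,l)) * cnj (v$l))" by (rule sum.swap)
  also have "\<dots> = s" unfolding s_entries by (intro sum.cong refl) (simp add: symA ac_simps)
  finally have s_real: "cnj s = s" .
  have N_real: "N = of_real (\<Sum>k<n. (cmod (v$k))^2)" unfolding N_def
    by (simp add: complex_norm_square mult.commute del: of_real_power)
  obtain k where k: "k < n" "v $ k \<noteq> 0" using v by (metis eq_vecI carrier_vecD index_zero_vec)
  have "(\<Sum>k<n. (cmod (v$k))^2) > 0" by (rule sum_pos2[of _ k]) (use k in auto)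
  hence "N \<noteq> 0" unfolding N_real by (metis of_real_eq_0_iff less_irrefl)
  hence "cnj z = z" using s_eq s_real N_real by (simp add: nonzero_eq_divide_eq[symmetric])
  hence "z = of_real (Re z)" by (metis Reals_cnj_iff complex_is_Real_iff of_real_Re)
  hence "of_real (poly (char_poly A) (Re z)) = (0::complex)"
    using z unfolding cp of_real_hom.poly_map_poly[symmetric] by metis
  thus ?thesis using eigenvalue_root_char_poly[OF A] by auto
qed

definition diag_block1 :: "real \<Rightarrow> real mat \<Rightarrow> real mat" where
  "diag_block1 a X = mat (Suc (dim_row X)) (Suc (dim_col X)) (\<lambda>(i,j).
     if i = 0 then (if j = 0 then a else 0) else if j = 0 then 0 else X $$ (i-1, j-1))"

lemma diag_block1_carrier [simp]: "X \<in> carrier_mat n m \<Longrightarrow> diag_block1 a X \<in> carrier_mat (Suc n) (Suc m)"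
  unfolding diag_block1_def by auto

lemma diag_block1_dims [simp]:
  "dim_row (diag_block1 a X) = Suc (dim_row X)" "dim_col (diag_block1 a X) = Suc (dim_col X)"
  unfolding diag_block1_def by auto

lemma diag_block1_index:
  "i < Suc (dim_row X) \<Longrightarrow> j < Suc (dim_col X) \<Longrightarrow> diag_block1 a X $$ (i,j) =
     (if i = 0 then (if j = 0 then a else 0) else if j = 0 then 0 else X $$ (i-1, j-1))"
  unfolding diag_block1_def by auto

lemma diag_block1_mult:
  assumes X: "X \<in> carrier_mat n m" and Y: "Y \<in> carrier_mat m k"
  shows "diag_block1 a X * diag_block1 b Y = diag_block1 (a*b) (X*Y)"
proof (rule eq_matI)
  fix i j assume i: "i < dim_row (diag_block1 (a*b) (X*Y))" and j: "j < dim_col (diag_block1 (a*b) (X*Y))"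
  have "(diag_block1 a X * diag_block1 b Y) $$ (i,j) = (\<Sum>l<Suc m. diag_block1 a X $$ (i,l) * diag_block1 b Y $$ (l,j))"
    using i j X Y by (simp add: scalar_prod_def atLeast0LessThan row_def col_def diag_block1_def)
  also have "\<dots> = diag_block1 a X $$ (i,0) * diag_block1 b Y $$ (0,j)
      + (\<Sum>l<m. diag_block1 a X $$ (i,Suc l) * diag_block1 b Y $$ (Suc l,j))"
    by (rule sum.lessThan_Suc_shift)
  also have "\<dots> = diag_block1 (a*b) (X*Y) $$ (i,j)"
    using i j X Y
    by (cases i; cases j) (auto simp: diag_block1_index diag_block1_def scalar_prod_def atLeast0LessThan row_def col_def)
  finally show "(diag_block1 a X * diag_block1 b Y) $$ (i,j) = diag_block1 (a*b) (X*Y) $$ (i,j)" .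
qed (use X Y in \<open>auto simp: diag_block1_def\<close>)

lemma diag_block1_transpose: "transpose_mat (diag_block1 a X) = diag_block1 a (transpose_mat X)"
  by (rule eq_matI) (auto simp: diag_block1_index diag_block1_def)

lemma diag_block1_one: "diag_block1 1 (1\<^sub>m n) = 1\<^sub>m (Suc n)"
  by (rule eq_matI) (auto simp: diag_block1_index diag_block1_def)

lemma diagonal_mat_diag_block1: "diagonal_mat D \<Longrightarrow> diagonal_mat (diag_block1 a D)"
  unfolding diagonal_mat_def by (auto simp: diag_block1_index diag_block1_def)

text \<open>For \<open>u = 0\<close> this is the identity matrix, since \<open>2 / 0 = 0\<close>.\<close>

definition householder :: "nat \<Rightarrow> real vec \<Rightarrow> real mat" where
  "householder n u = mat n n (\<lambda>(i,j). (if i = j then 1 else 0) - 2 / (u \<bullet> u) * u$i * u$j)"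

lemma householder_carrier [simp]: "householder n u \<in> carrier_mat n n"
  unfolding householder_def by auto

lemma householder_dims [simp]: "dim_row (householder n u) = n" "dim_col (householder n u) = n"
  unfolding householder_def by auto

lemma householder_transpose: "transpose_mat (householder n u) = householder n u"
  unfolding householder_def by (rule eq_matI) auto

lemma householder_square:
  assumes u: "u \<in> carrier_vec n"
  shows "householder n u * householder n u = 1\<^sub>m n"
proof (rule eq_matI)
  fix i j assume "i < dim_row (1\<^sub>m n :: real mat)" and "j < dim_col (1\<^sub>m n :: real mat)"
  hence i: "i < n" and j: "j < n" by auto
  define c where "c = 2 / (u \<bullet> u)"
  define d where "d = (\<lambda>a b::nat. if a = b then 1 else (0::real))"
  have delta: "(\<Sum>k<n. d a k * f k) = f a" "(\<Sum>k<n. f k * d k a) = f a"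
    if "a < n" for a and f :: "nat \<Rightarrow> real"
    using that by (simp_all add: d_def if_distrib if_distribR cong: if_cong)
  have "(householder n u * householder n u) $$ (i,j) = (\<Sum>k<n. (d i k - c*u$i*u$k) * (d k j - c*u$k*u$j))"
    using i j by (simp add: householder_def scalar_prod_def atLeast0LessThan row_def col_def d_def c_def)
  also have "\<dots> = (\<Sum>k<n. d i k * d k j) - c*(\<Sum>k<n. d i k * u$k)*u$j - c*u$i*(\<Sum>k<n. u$k * d k j)
     + c^2*u$i*u$j*(\<Sum>k<n. u$k*u$k)"
    by (simp add: sum_subtractf sum.distrib sum_distrib_left sum_distrib_right algebra_simps power2_eq_square)
  also have "\<dots> = d i j - 2*c*u$i*u$j + c^2*(u \<bullet> u)*u$i*u$j"
    using u delta(1)[OF i, of "\<lambda>k. d k j"] delta(1)[OF i, of "\<lambda>k. u$k"] delta(2)[OF j, of "\<lambda>k. u$k"]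
    by (simp add: scalar_prod_def atLeast0LessThan)
  also have "c^2 * (u \<bullet> u) = 2 * c"
    unfolding c_def by (cases "u \<bullet> u = 0") (simp_all add: power2_eq_square)
  finally show "(householder n u * householder n u) $$ (i,j) = 1\<^sub>m n $$ (i,j)"
    using i j by (simp add: d_def)
qed auto

lemma householder_unit_vec_0:
  fixes w :: "real vec"
  assumes w: "w \<in> carrier_vec n" and n: "n > 0" and ww: "w \<bullet> w = 1"
  shows "householder n (w - unit_vec n 0) *\<^sub>v unit_vec n 0 = w"
proof (rule eq_vecI)
  let ?u = "w - unit_vec n 0"
  have u: "?u \<in> carrier_vec n" using w by auto
  have e: "unit_vec n 0 \<in> carrier_vec n" by simp
  have uu: "?u \<bullet> ?u = 2 - 2 * w$0"
    using w n ww e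
    by (simp add: minus_scalar_prod_distrib[OF w e u] scalar_prod_minus_distrib[OF w w e]
        scalar_prod_minus_distrib[OF e w e] comm_scalar_prod[OF e w])
  fix i assume "i < dim_vec w"
  hence i: "i < n" using w by auto
  have lhs: "(householder n ?u *\<^sub>v unit_vec n 0) $ i = (if i = 0 then 1 else 0) - 2 / (?u \<bullet> ?u) * ?u$i * ?u$0"
    using i n by (simp add: householder_def)
  show "(householder n ?u *\<^sub>v unit_vec n 0) $ i = w $ i"
  proof (cases "?u \<bullet> ?u = 0")
    case True
    hence "?u $ i = 0" using scalar_prod_self_eq_0_iff[OF u] i by simp
    thus ?thesis unfolding lhs using True i w by auto
  next
    case False
    hence "2 / (?u \<bullet> ?u) * ?u$0 = -1" using uu n w by (auto simp: field_simps)
    hence "2 / (?u \<bullet> ?u) * ?u$i * ?u$0 = - ?u$i" by (metis mult.assoc mult.commute mult_minus1_right)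
    thus ?thesis unfolding lhs using i w n by auto
  qed
qed (use w in auto)

text \<open>A reflection taking the first basis vector to a unit eigenvector splits off a \<open>1 \<times> 1\<close> block.\<close>

lemma householder_deflation:
  fixes A :: "real mat" and w :: "real vec"
  assumes A: "A \<in> carrier_mat (Suc n) (Suc n)" and sym: "transpose_mat A = A"
    and w: "w \<in> carrier_vec (Suc n)" and ww: "w \<bullet> w = 1" and Aw: "A *\<^sub>v w = e \<cdot>\<^sub>v w"
  obtains H C where "H \<in> carrier_mat (Suc n) (Suc n)" "transpose_mat H = H" "H * H = 1\<^sub>m (Suc n)"
    "C \<in> carrier_mat n n" "transpose_mat C = C" "H * A * H = diag_block1 e C"
proof -
  define H where "H = householder (Suc n) (w - unit_vec (Suc n) 0)"
  have H: "H \<in> carrier_mat (Suc n) (Suc n)" and HT: "transpose_mat H = H"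
    and HH: "H * H = 1\<^sub>m (Suc n)" and He: "H *\<^sub>v unit_vec (Suc n) 0 = w"
    unfolding H_def using householder_transpose householder_square householder_unit_vec_0[OF w _ ww] w
    by auto
  have Hw: "H *\<^sub>v w = unit_vec (Suc n) 0"
    using He[symmetric] H HH by (metis assoc_mult_mat_vec one_mult_mat_vec unit_vec_carrier)
  define B where "B = H * A * H"
  have B: "B \<in> carrier_mat (Suc n) (Suc n)" unfolding B_def using H A by auto
  have BT: "transpose_mat B = B" unfolding B_def using H A HT sym
    by (simp add: transpose_mult[of _ "Suc n" "Suc n" _ "Suc n"] assoc_mult_mat[of _ "Suc n" "Suc n" _ "Suc n"])
  have Be: "B *\<^sub>v unit_vec (Suc n) 0 = e \<cdot>\<^sub>v unit_vec (Suc n) 0"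
  proof -
    have "B *\<^sub>v unit_vec (Suc n) 0 = H *\<^sub>v (A *\<^sub>v (H *\<^sub>v unit_vec (Suc n) 0))"
      unfolding B_def using H A
      by (simp add: assoc_mult_mat_vec[of "H*A" "Suc n" "Suc n" H "Suc n"]
          assoc_mult_mat_vec[of H "Suc n" "Suc n" A "Suc n"] del: assoc_mult_mat)
    also have "\<dots> = e \<cdot>\<^sub>v unit_vec (Suc n) 0" using He Aw Hw H w by (simp add: mult_mat_vec)
    finally show ?thesis .
  qed
  have Bk0: "B $$ (k,0) = (if k = 0 then e else 0)" if k: "k < Suc n" for k
  proof -
    have "B $$ (k,0) = (B *\<^sub>v unit_vec (Suc n) 0) $ k" using B k by (simp add: row_def)
    thus ?thesis unfolding Be using k by simp
  qed
  have B0k: "B $$ (0,k) = (if k = 0 then e else 0)" if k: "k < Suc n" for k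
    using Bk0[OF k] BT B k by (metis index_transpose_mat(1) carrier_matD zero_less_Suc)
  define C where "C = mat n n (\<lambda>(i,j). B $$ (Suc i, Suc j))"
  have C: "C \<in> carrier_mat n n" unfolding C_def by auto
  have CT: "transpose_mat C = C" unfolding C_def
    by (rule eq_matI) (use BT B in \<open>auto, metis Suc_less_eq carrier_matD index_transpose_mat(1)\<close>)
  have "B = diag_block1 e C"
    by (rule eq_matI) (use B C Bk0 B0k in \<open>auto simp: diag_block1_index diag_block1_def C_def split: nat.splits\<close>)
  with H HT HH C CT show ?thesis unfolding B_def by (rule that)
qed

lemma real_symmetric_mat_diagonalizable:
  fixes A :: "real mat"
  assumes "A \<in> carrier_mat n n" "transpose_mat A = A"
  shows "\<exists>Q \<in> carrier_mat n n. transpose_mat Q * Q = 1\<^sub>m n \<and> diagonal_mat (transpose_mat Q * A * Q)"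
  using assms
proof (induction n arbitrary: A)
  case 0
  show ?case by (intro bexI[of _ "1\<^sub>m 0"]) (use 0 in \<open>auto simp: diagonal_mat_def\<close>)
next
  case (Suc n A)
  have A: "A \<in> carrier_mat (Suc n) (Suc n)" and sym: "transpose_mat A = A" using Suc.prems by auto
  obtain e where "eigenvalue A e" using real_symmetric_mat_has_eigenvalue[OF A sym] by auto
  then obtain v where "eigenvector A v e" unfolding eigenvalue_def by blast
  hence v: "v \<in> carrier_vec (Suc n)" "v \<noteq> 0\<^sub>v (Suc n)" and Av: "A *\<^sub>v v = e \<cdot>\<^sub>v v"
    using A unfolding eigenvector_def by auto
  have vv: "v \<bullet> v > 0" using scalar_prod_self_nonneg[of v] scalar_prod_self_eq_0_iff[OF v(1)] v(2) by linarith
  define w where "w = (1 / sqrt (v \<bullet> v)) \<cdot>\<^sub>v v"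
  have w: "w \<in> carrier_vec (Suc n)" unfolding w_def using v by auto
  have ww: "w \<bullet> w = 1" unfolding w_def using v vv
    by (simp add: smult_scalar_prod_distrib scalar_prod_smult_distrib[OF v(1) v(1)] power2_eq_square[symmetric])
  have Aw: "A *\<^sub>v w = e \<cdot>\<^sub>v w" unfolding w_def using A v Av
    by (simp add: mult_mat_vec smult_smult_assoc mult.commute)
  obtain H C where H: "H \<in> carrier_mat (Suc n) (Suc n)" and HT: "transpose_mat H = H"
    and HH: "H * H = 1\<^sub>m (Suc n)" and C: "C \<in> carrier_mat n n" and CT: "transpose_mat C = C"
    and HAH: "H * A * H = diag_block1 e C"
    by (rule householder_deflation[OF A sym w ww Aw])
  obtain P where P: "P \<in> carrier_mat n n" and PP: "transpose_mat P * P = 1\<^sub>m n"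
    and Pd: "diagonal_mat (transpose_mat P * C * P)" using Suc.IH[OF C CT] by blast
  define E where "E = diag_block1 1 P"
  have E: "E \<in> carrier_mat (Suc n) (Suc n)" and ET: "transpose_mat E = diag_block1 1 (transpose_mat P)"
    unfolding E_def using P diag_block1_transpose by auto
  define Q where "Q = H * E"
  have Q: "Q \<in> carrier_mat (Suc n) (Suc n)" unfolding Q_def using H E by auto
  have QT: "transpose_mat Q = transpose_mat E * H" unfolding Q_def using H E HT
    by (simp add: transpose_mult[of _ "Suc n" "Suc n" _ "Suc n"])
  have ETc: "transpose_mat E \<in> carrier_mat (Suc n) (Suc n)" using E by auto
  have "transpose_mat Q * Q = transpose_mat E * (H * H) * E"
    unfolding QT unfolding Q_def using H E ETc by (simp add: assoc_mult_mat[of _ "Suc n" "Suc n" _ "Suc n" _ "Suc n"])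
  also have "\<dots> = diag_block1 1 (transpose_mat P * P)"
    unfolding HH ET unfolding E_def using P by (simp add: diag_block1_mult[of _ n n _ n])
  finally have QQ: "transpose_mat Q * Q = 1\<^sub>m (Suc n)" unfolding PP diag_block1_one .
  have "transpose_mat Q * A * Q = transpose_mat E * (H * A * H) * E"
    unfolding QT unfolding Q_def using H E ETc A by (simp add: assoc_mult_mat[of _ "Suc n" "Suc n" _ "Suc n" _ "Suc n"])
  also have "\<dots> = diag_block1 (1*e*1) (transpose_mat P * C * P)"
    unfolding HAH ET unfolding E_def using P C by (simp add: diag_block1_mult[of _ n n _ n])
  finally have "diagonal_mat (transpose_mat Q * A * Q)" using diagonal_mat_diag_block1[OF Pd] by simp
  with Q QQ show ?case by blast
qed

section \<open>Positive semidefinite square roots\<close>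

definition psd_mat :: "nat \<Rightarrow> real mat \<Rightarrow> bool" where
  "psd_mat n A \<longleftrightarrow> (\<forall>v \<in> carrier_vec n. v \<bullet> (A *\<^sub>v v) \<ge> 0)"

lemma psd_mat_congruence:
  assumes A: "A \<in> carrier_mat n n" and P: "P \<in> carrier_mat n m" and psd: "psd_mat n A"
  shows "psd_mat m (transpose_mat P * A * P)"
  unfolding psd_mat_def
proof
  fix v :: "real vec" assume v: "v \<in> carrier_vec m"
  let ?y = "A *\<^sub>v (P *\<^sub>v v)"
  have y: "?y \<in> carrier_vec n" using A P v by auto
  have "v \<bullet> ((transpose_mat P * A * P) *\<^sub>v v) = v \<bullet> (transpose_mat P *\<^sub>v ?y)"
    using A P v assoc_mult_mat_vec[of "transpose_mat P * A" m n P m v]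
      assoc_mult_mat_vec[of "transpose_mat P" m n A n "P *\<^sub>v v"]
    by (simp del: assoc_mult_mat_vec)
  also have "\<dots> = (transpose_mat P *\<^sub>v ?y) \<bullet> v" using P v y by (intro comm_scalar_prod[of _ m]) auto
  also have "\<dots> = ?y \<bullet> (P *\<^sub>v v)" using transpose_vec_mult_scalar[OF P v y] .
  also have "\<dots> = (P *\<^sub>v v) \<bullet> ?y" using P v y by (intro comm_scalar_prod[of _ n]) auto
  finally show "v \<bullet> ((transpose_mat P * A * P) *\<^sub>v v) \<ge> 0" using psd P v unfolding psd_mat_def by auto
qed

lemma psd_mat_diag_nonneg:
  assumes "D \<in> carrier_mat n n" "psd_mat n D" "k < n"
  shows "D $$ (k,k) \<ge> 0"
proof -
  have "D $$ (k,k) = unit_vec n k \<bullet> (D *\<^sub>v unit_vec n k)" using assms by simp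
  thus ?thesis using assms unfolding psd_mat_def by (metis unit_vec_carrier)
qed

lemma diagonal_mat_sqrt:
  assumes D: "D \<in> carrier_mat n n" "diagonal_mat D" and nonneg: "\<And>k. k < n \<Longrightarrow> D $$ (k,k) \<ge> 0"
  defines "E \<equiv> mat n n (\<lambda>(i,j). if i = j then sqrt (D $$ (i,i)) else 0)"
  shows "E \<in> carrier_mat n n" "transpose_mat E = E" "E * E = D" "psd_mat n E"
proof -
  show E: "E \<in> carrier_mat n n" unfolding E_def by auto
  show "transpose_mat E = E" unfolding E_def by (rule eq_matI) auto
  show "E * E = D"
  proof (rule eq_matI)
    fix i j assume i: "i < dim_row D" and j: "j < dim_col D"
    have "(E * E) $$ (i,j) = (\<Sum>l<n. E $$ (i,l) * E $$ (l,j))"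
      using i j D E by (simp add: scalar_prod_def atLeast0LessThan row_def col_def)
    also have "\<dots> = (\<Sum>l<n. if l = i then (if i = j then D $$ (i,i) else 0) else 0)"
      using i j D nonneg by (intro sum.cong) (auto simp: E_def)
    also have "\<dots> = D $$ (i,j)" using i j D unfolding diagonal_mat_def by auto
    finally show "(E * E) $$ (i,j) = D $$ (i,j)" .
  qed (use D E in auto)
  show "psd_mat n E" unfolding psd_mat_def
  proof
    fix z :: "real vec" assume z: "z \<in> carrier_vec n"
    have Ez: "(E *\<^sub>v z) $ k = sqrt (D $$ (k,k)) * z$k" if k: "k < n" for k
    proof -
      have "(E *\<^sub>v z) $ k = (\<Sum>l<n. E $$ (k,l) * z$l)"
        using k E z by (simp add: scalar_prod_def atLeast0LessThan row_def)
      also have "\<dots> = (\<Sum>l<n. if l = k then sqrt (D $$ (k,k)) * z$k else 0)"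
        using k by (intro sum.cong) (auto simp: E_def)
      finally show ?thesis using k by simp
    qed
    have "z \<bullet> (E *\<^sub>v z) = (\<Sum>k<n. sqrt (D $$ (k,k)) * (z$k)\<^sup>2)"
      using z E Ez by (simp add: scalar_prod_def atLeast0LessThan power2_eq_square ac_simps)
    also have "\<dots> \<ge> 0" using nonneg by (intro sum_nonneg) auto
    finally show "z \<bullet> (E *\<^sub>v z) \<ge> 0" .
  qed
qed

lemma psd_sqrt_exists:
  assumes A: "(A::real mat) \<in> carrier_mat n n" and sym: "transpose_mat A = A" and psd: "psd_mat n A"
  shows "\<exists>B \<in> carrier_mat n n. transpose_mat B = B \<and> psd_mat n B \<and> B * B = A"
proof -
  obtain Q where Q: "Q \<in> carrier_mat n n" and QQ: "transpose_mat Q * Q = 1\<^sub>m n"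
    and Dd: "diagonal_mat (transpose_mat Q * A * Q)" using real_symmetric_mat_diagonalizable[OF A sym] by blast
  have QT: "transpose_mat Q \<in> carrier_mat n n" using Q by auto
  have QQ': "Q * transpose_mat Q = 1\<^sub>m n" using mat_mult_left_right_inverse[OF QT Q QQ] .
  define D where "D = transpose_mat Q * A * Q"
  have D: "D \<in> carrier_mat n n" unfolding D_def using Q A by auto
  have D_nonneg: "D $$ (k,k) \<ge> 0" if "k < n" for k
    using psd_mat_diag_nonneg[OF D psd_mat_congruence[OF A Q psd, folded D_def] that] .
  define E where "E = mat n n (\<lambda>(i,j). if i = j then sqrt (D $$ (i,i)) else 0)"
  note E = diagonal_mat_sqrt[OF D Dd[folded D_def] D_nonneg, folded E_def]
  define B where "B = Q * E * transpose_mat Q"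
  have B: "B \<in> carrier_mat n n" unfolding B_def using Q E by auto
  have "transpose_mat B = B" unfolding B_def using Q E
    by (simp add: transpose_mult[of _ n n _ n] assoc_mult_mat[of _ n n _ n _ n])
  moreover have "psd_mat n B"
    using psd_mat_congruence[OF E(1) QT E(4)] unfolding B_def by simp
  moreover have "B * B = A"
  proof -
    have "B * B = Q * E * (transpose_mat Q * Q) * E * transpose_mat Q"
      unfolding B_def using Q QT E by (simp add: assoc_mult_mat[of _ n n _ n _ n])
    also have "\<dots> = Q * D * transpose_mat Q"
      unfolding QQ using Q QT E by (simp add: assoc_mult_mat[of _ n n _ n _ n])
    also have "\<dots> = (Q * transpose_mat Q) * A * (Q * transpose_mat Q)"
      unfolding D_def using Q QT A by (simp add: assoc_mult_mat[of _ n n _ n _ n])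
    finally show ?thesis unfolding QQ' using A by simp
  qed
  ultimately show ?thesis using B by blast
qed

text \<open>With \<open>y = B x - \<mu> x\<close> one has \<open>B y = -\<mu> y\<close>, so positivity of \<open>B\<close> forces \<open>\<mu> (y \<bullet> y) = 0\<close>;
  if \<open>\<mu> = 0\<close> then \<open>(B x) \<bullet> (B x) = x \<bullet> (B (B x)) = 0\<close>.\<close>

lemma psd_mat_eigenvector_of_square:
  fixes B :: "real mat"
  assumes B: "B \<in> carrier_mat n n" and BT: "transpose_mat B = B" and psd: "psd_mat n B"
    and x: "x \<in> carrier_vec n" and \<mu>: "\<mu> \<ge> 0" and BBx: "B *\<^sub>v (B *\<^sub>v x) = (\<mu> * \<mu>) \<cdot>\<^sub>v x"
  shows "B *\<^sub>v x = \<mu> \<cdot>\<^sub>v x"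
proof -
  define y where "y = B *\<^sub>v x - \<mu> \<cdot>\<^sub>v x"
  have y: "y \<in> carrier_vec n" unfolding y_def using B x by auto
  have By: "B *\<^sub>v y = (- \<mu>) \<cdot>\<^sub>v y"
  proof -
    have "B *\<^sub>v y = B *\<^sub>v (B *\<^sub>v x) - \<mu> \<cdot>\<^sub>v (B *\<^sub>v x)"
      unfolding y_def using B x by (simp add: mult_minus_distrib_mat_vec[of _ n n] mult_mat_vec)
    also have "\<dots> = (- \<mu>) \<cdot>\<^sub>v y" unfolding BBx y_def
      by (rule eq_vecI) (use B x in \<open>auto simp: algebra_simps\<close>)
    finally show ?thesis .
  qed
  have "y \<bullet> (B *\<^sub>v y) \<ge> 0" using psd y unfolding psd_mat_def by auto
  hence "- \<mu> * (y \<bullet> y) \<ge> 0" unfolding By using y by simp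
  moreover have "\<mu> * (y \<bullet> y) \<ge> 0" using \<mu> scalar_prod_self_nonneg[of y] by simp
  ultimately have "\<mu> * (y \<bullet> y) = 0" by linarith
  hence "\<mu> = 0 \<or> y \<bullet> y = 0" by simp
  hence "y = 0\<^sub>v n"
  proof
    assume "y \<bullet> y = 0" thus ?thesis using scalar_prod_self_eq_0_iff[OF y] by simp
  next
    assume \<mu>0: "\<mu> = 0"
    have "(B *\<^sub>v x) \<bullet> (B *\<^sub>v x) = x \<bullet> (B *\<^sub>v (B *\<^sub>v x))"
      using transpose_vec_mult_scalar[of B n n "B *\<^sub>v x" x] B x BT by simp
    also have "\<dots> = 0" unfolding BBx \<mu>0 using x by simp
    finally have "B *\<^sub>v x = 0\<^sub>v n" using scalar_prod_self_eq_0_iff[of "B *\<^sub>v x" n] B x by auto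
    thus ?thesis unfolding y_def \<mu>0 using x by auto
  qed
  show ?thesis
  proof (rule eq_vecI)
    fix i assume "i < dim_vec (\<mu> \<cdot>\<^sub>v x)"
    hence "i < n" using x by auto
    thus "(B *\<^sub>v x) $ i = (\<mu> \<cdot>\<^sub>v x) $ i"
      using arg_cong[OF \<open>y = 0\<^sub>v n\<close>, of "\<lambda>v. v $ i"] B x unfolding y_def by simp
  qed (use B x in auto)
qed

lemma psd_sqrt_unique:
  assumes B: "(B::real mat) \<in> carrier_mat n n" "transpose_mat B = B" "psd_mat n B"
    and B': "B' \<in> carrier_mat n n" "transpose_mat B' = B'" "psd_mat n B'"
    and BB: "B * B = B' * B'"
  shows "B = B'"
proof -
  obtain Q where Q: "Q \<in> carrier_mat n n" and QQ: "transpose_mat Q * Q = 1\<^sub>m n"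
    and Ld: "diagonal_mat (transpose_mat Q * B' * Q)"
    using real_symmetric_mat_diagonalizable[OF B'(1,2)] by blast
  have QT: "transpose_mat Q \<in> carrier_mat n n" using Q by auto
  have QQ': "Q * transpose_mat Q = 1\<^sub>m n" using mat_mult_left_right_inverse[OF QT Q QQ] .
  define L where "L = transpose_mat Q * B' * Q"
  have L: "L \<in> carrier_mat n n" unfolding L_def using Q B' by auto
  have L_nonneg: "L $$ (k,k) \<ge> 0" if "k < n" for k
    using psd_mat_diag_nonneg[OF L psd_mat_congruence[OF B'(1) Q B'(3), folded L_def] that] .
  have B'Q: "B' * Q = Q * L"
  proof -
    have "Q * L = (Q * transpose_mat Q) * B' * Q"
      unfolding L_def using Q QT B' by (simp add: assoc_mult_mat[of _ n n _ n _ n])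
    thus ?thesis unfolding QQ' using B' Q by simp
  qed
  have "B *\<^sub>v col Q k = B' *\<^sub>v col Q k" if k: "k < n" for k
  proof -
    define x where "x = col Q k"
    define \<mu> where "\<mu> = L $$ (k,k)"
    have x: "x \<in> carrier_vec n" unfolding x_def using Q by auto
    have "col L k = \<mu> \<cdot>\<^sub>v unit_vec n k"
      by (rule eq_vecI) (use L k Ld in \<open>auto simp: \<mu>_def L_def[symmetric] diagonal_mat_def\<close>)
    hence B'x: "B' *\<^sub>v x = \<mu> \<cdot>\<^sub>v x"
      unfolding x_def using B' Q L k
      by (simp add: col_mult2[symmetric] B'Q mult_mat_vec) (rule eq_vecI; auto)
    have "B *\<^sub>v (B *\<^sub>v x) = B' *\<^sub>v (B' *\<^sub>v x)"
      using assoc_mult_mat_vec[OF B(1) B(1) x] assoc_mult_mat_vec[OF B'(1) B'(1) x] BB by simp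
    also have "\<dots> = (\<mu> * \<mu>) \<cdot>\<^sub>v x" using B' x by (simp add: mult_mat_vec B'x smult_smult_assoc)
    finally have "B *\<^sub>v x = \<mu> \<cdot>\<^sub>v x"
      using psd_mat_eigenvector_of_square[OF B x] L_nonneg[OF k] unfolding \<mu>_def by blast
    thus ?thesis unfolding x_def[symmetric] B'x .
  qed
  hence "B * Q = B' * Q" by (intro mat_col_eqI) (use B B' Q in auto)
  hence "B * Q * transpose_mat Q = B' * Q * transpose_mat Q" by simp
  thus ?thesis using B B' Q QT QQ' by (simp add: assoc_mult_mat[of _ n n _ n _ n])
qed

lemma psd_sqrt:
  assumes A: "(A::real mat) \<in> carrier_mat n n" "transpose_mat A = A" "psd_mat n A"
  shows "psd_sqrt A \<in> carrier_mat n n" and "psd_sqrt A * psd_sqrt A = A"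
proof -
  let ?P = "\<lambda>B. B \<in> carrier_mat n n \<and> transpose_mat B = B \<and> psd_mat n B \<and> B * B = A"
  obtain B where B: "?P B" using psd_sqrt_exists[OF A] by blast
  have "\<exists>!B. ?P B"
  proof (rule ex1I[of _ B])
    fix B' assume "?P B'"
    thus "B' = B" using psd_sqrt_unique[of B' n B] B by auto
  qed (rule B)
  moreover have "psd_sqrt A = (THE B. ?P B)" unfolding psd_sqrt_def psd_mat_def using A(1) by simp
  ultimately have "?P (psd_sqrt A)" using theI' by simp
  thus "psd_sqrt A \<in> carrier_mat n n" "psd_sqrt A * psd_sqrt A = A" by auto
qed

lemma mat_inv_eqI:
  assumes A: "(A::real mat) \<in> carrier_mat n n" and B: "B \<in> carrier_mat n n" and AB: "A * B = 1\<^sub>m n"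
  shows "mat_inv A = B"
  unfolding mat_inv_def
proof (rule the_equality)
  have "B * A = 1\<^sub>m n" using mat_mult_left_right_inverse[OF A B AB] .
  thus "B \<in> carrier_mat (dim_row A) (dim_row A) \<and> A * B = 1\<^sub>m (dim_row A) \<and> B * A = 1\<^sub>m (dim_row A)"
    using A B AB by auto
next
  fix B' assume "B' \<in> carrier_mat (dim_row A) (dim_row A) \<and> A * B' = 1\<^sub>m (dim_row A) \<and> B' * A = 1\<^sub>m (dim_row A)"
  hence B': "B' \<in> carrier_mat n n" "B' * A = 1\<^sub>m n" using A by auto
  have "B' = B' * (A * B)" using AB B' by simp
  also have "\<dots> = (B' * A) * B" by (rule assoc_mult_mat[symmetric]) (use A B B' in auto)
  finally show "B' = B" using B' B by simp
qed

lemma inv_sqrt_of_invertible_psd: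
  assumes A: "(A::real mat) \<in> carrier_mat n n" "transpose_mat A = A" "psd_mat n A" and inv: "invertible_mat A"
  shows "inv_sqrt A \<in> carrier_mat n n" "psd_sqrt A * inv_sqrt A = 1\<^sub>m n" "inv_sqrt A * psd_sqrt A = 1\<^sub>m n"
    "mat_inv A = inv_sqrt A * inv_sqrt A"
proof -
  let ?S = "psd_sqrt A"
  note S = psd_sqrt[OF A]
  obtain B where AB: "A * B = 1\<^sub>m n" and BA: "B * A = 1\<^sub>m (dim_row B)"
    using inv A(1) unfolding invertible_mat_def inverts_mat_def by auto
  have "dim_col B = n" using arg_cong[OF AB, of dim_col] A(1) by simp
  moreover have "dim_row B = n" using arg_cong[OF BA, of dim_col] A(1) by simp
  ultimately have B: "B \<in> carrier_mat n n" by auto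
  have "?S * (?S * B) = 1\<^sub>m n" using S B AB by (simp add: assoc_mult_mat[of _ n n _ n _ n, symmetric])
  hence T: "inv_sqrt A = ?S * B" unfolding inv_sqrt_def using S B by (intro mat_inv_eqI) auto
  show T_carrier: "inv_sqrt A \<in> carrier_mat n n" unfolding T using S B by auto
  show ST: "?S * inv_sqrt A = 1\<^sub>m n" unfolding T using S B AB by (simp add: assoc_mult_mat[of _ n n _ n _ n, symmetric])
  show TS: "inv_sqrt A * ?S = 1\<^sub>m n" using mat_mult_left_right_inverse[OF S(1) T_carrier ST] .
  have "A * (inv_sqrt A * inv_sqrt A) = ?S * ?S * (inv_sqrt A * inv_sqrt A)" using S(2) by simp
  also have "\<dots> = ?S * (?S * inv_sqrt A) * inv_sqrt A"
    using S(1) T_carrier by (simp add: assoc_mult_mat[of _ n n _ n _ n])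
  also have "\<dots> = 1\<^sub>m n" using ST S T_carrier by simp
  finally show "mat_inv A = inv_sqrt A * inv_sqrt A" using A T_carrier by (intro mat_inv_eqI) auto
qed

section \<open>Covariance matrices\<close>

lemma cov_mat_self_symmetric: "transpose_mat (cov_mat b f m f m) = cov_mat b f m f m"
  unfolding cov_mat_def by (rule eq_matI) (auto simp: mult.commute)

lemma integrable_mult_of_square_integrable:
  fixes f g :: "'a \<Rightarrow> real"
  assumes "f \<in> borel_measurable M" "g \<in> borel_measurable M"
    and "integrable M (\<lambda>x. (f x)\<^sup>2)" "integrable M (\<lambda>x. (g x)\<^sup>2)"
  shows "integrable M (\<lambda>x. f x * g x)"
proof (rule Bochner_Integration.integrable_bound[where f="\<lambda>x. (f x)\<^sup>2 + (g x)\<^sup>2"])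
  show "integrable M (\<lambda>x. (f x)\<^sup>2 + (g x)\<^sup>2)" using assms by auto
  show "(\<lambda>x. f x * g x) \<in> borel_measurable M" using assms by auto
  have "\<bar>a * c\<bar> \<le> a\<^sup>2 + c\<^sup>2" for a c :: real
  proof -
    have "2 * (\<bar>a\<bar> * \<bar>c\<bar>) \<le> a\<^sup>2 + c\<^sup>2"
      using sum_squares_bound[of "\<bar>a\<bar>" "\<bar>c\<bar>"] by (simp add: mult.assoc)
    moreover have "0 \<le> \<bar>a\<bar> * \<bar>c\<bar>" by simp
    ultimately show ?thesis unfolding abs_mult by linarith
  qed
  thus "AE x in M. norm (f x * g x) \<le> norm ((f x)\<^sup>2 + (g x)\<^sup>2)" by simp
qed

lemma cov_mat_self_psd:
  fixes \<phi> :: "'a \<Rightarrow> real vec"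
  assumes "prob_space b" and meas: "\<And>k. k < r \<Longrightarrow> (\<lambda>x. \<phi> x $ k) \<in> borel_measurable b"
    and sq: "\<And>k. k < r \<Longrightarrow> integrable b (\<lambda>x. (\<phi> x $ k)\<^sup>2)"
  shows "psd_mat r (cov_mat b \<phi> r \<phi> r)"
  unfolding psd_mat_def
proof
  interpret prob_space b by fact
  fix v :: "real vec" assume v: "v \<in> carrier_vec r"
  define f where "f k x = \<phi> x $ k" for k x
  define m where "m k = (\<integral>x. f k x \<partial>b)" for k
  define g where "g k x = f k x - m k" for k x
  have fm: "f k \<in> borel_measurable b" if "k < r" for k using meas that unfolding f_def by auto
  have fi: "integrable b (f k)" if "k < r" for k
    using square_integrable_imp_integrable[OF fm[OF that]] sq[OF that] unfolding f_def by auto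
  have ffi: "integrable b (\<lambda>x. f k x * f l x)" if "k < r" "l < r" for k l
    using integrable_mult_of_square_integrable[OF fm fm] sq that unfolding f_def by blast
  have ggi: "integrable b (\<lambda>x. g k x * g l x)"
    and ggI: "(\<integral>x. g k x * g l x \<partial>b) = (\<integral>x. f k x * f l x \<partial>b) - m k * m l"
    if "k < r" "l < r" for k l
  proof -
    have eq: "(\<lambda>x. g k x * g l x) = (\<lambda>x. f k x * f l x - m k * f l x - m l * f k x + m k * m l)"
      unfolding g_def by (auto simp: algebra_simps)
    show "integrable b (\<lambda>x. g k x * g l x)" unfolding eq using fi ffi that by auto
    show "(\<integral>x. g k x * g l x \<partial>b) = (\<integral>x. f k x * f l x \<partial>b) - m k * m l" unfolding eq
      using fi ffi that by (simp add: m_def prob_space algebra_simps)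
  qed
  let ?A = "cov_mat b \<phi> r \<phi> r"
  have A_entry: "?A $$ (k,l) = (\<integral>x. g k x * g l x \<partial>b)" if "k < r" "l < r" for k l
    using that ggI unfolding cov_mat_def f_def m_def by simp
  have "v \<bullet> (?A *\<^sub>v v) = (\<Sum>k<r. v$k * (\<Sum>l<r. ?A $$ (k,l) * v$l))"
    using v unfolding cov_mat_def by (simp add: scalar_prod_def atLeast0LessThan row_def)
  also have "\<dots> = (\<Sum>k<r. \<Sum>l<r. \<integral>x. v$k * v$l * (g k x * g l x) \<partial>b)"
    by (intro sum.cong refl) (simp add: A_entry sum_distrib_left ac_simps)
  also have "\<dots> = (\<Sum>k<r. \<integral>x. (\<Sum>l<r. v$k * v$l * (g k x * g l x)) \<partial>b)"
    by (rule sum.cong[OF refl], subst Bochner_Integration.integral_sum) (auto intro!: integrable_mult_right ggi)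
  also have "\<dots> = (\<integral>x. (\<Sum>k<r. \<Sum>l<r. v$k * v$l * (g k x * g l x)) \<partial>b)"
    by (subst Bochner_Integration.integral_sum) (auto intro!: integrable_sum integrable_mult_right ggi)
  also have "\<dots> = (\<integral>x. (\<Sum>k<r. v$k * g k x)\<^sup>2 \<partial>b)"
    by (simp add: power2_eq_square sum_product ac_simps)
  also have "\<dots> \<ge> 0" by simp
  finally show "v \<bullet> (?A *\<^sub>v v) \<ge> 0" .
qed

lemma cov_mat_distr:
  fixes f g :: "'b \<Rightarrow> real vec"
  assumes h: "h \<in> measurable b N"
    and f: "\<And>k. k < m \<Longrightarrow> (\<lambda>y. f y $ k) \<in> borel_measurable N"
    and g: "\<And>l. l < n \<Longrightarrow> (\<lambda>y. g y $ l) \<in> borel_measurable N"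
  shows "cov_mat b (\<lambda>x. f (h x)) m (\<lambda>x. g (h x)) n = cov_mat (distr b N h) f m g n"
  unfolding cov_mat_def
proof (rule eq_matI)
  fix k l assume "k < dim_row (mat m n (\<lambda>(k, l). (\<integral>y. f y $ k * g y $ l \<partial>distr b N h) -
      (\<integral>y. f y $ k \<partial>distr b N h) * (\<integral>y. g y $ l \<partial>distr b N h)))"
    and "l < dim_col (mat m n (\<lambda>(k, l). (\<integral>y. f y $ k * g y $ l \<partial>distr b N h) -
      (\<integral>y. f y $ k \<partial>distr b N h) * (\<integral>y. g y $ l \<partial>distr b N h)))"
  hence k: "k < m" and l: "l < n" by auto
  have fg: "(\<lambda>y. f y $ k * g y $ l) \<in> borel_measurable N" using f[OF k] g[OF l] by measurable
  show "mat m n (\<lambda>(k, l). (\<integral>x. f (h x) $ k * g (h x) $ l \<partial>b) -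
      (\<integral>x. f (h x) $ k \<partial>b) * (\<integral>x. g (h x) $ l \<partial>b)) $$ (k, l) =
    mat m n (\<lambda>(k, l). (\<integral>y. f y $ k * g y $ l \<partial>distr b N h) -
      (\<integral>y. f y $ k \<partial>distr b N h) * (\<integral>y. g y $ l \<partial>distr b N h)) $$ (k, l)"
    using k l by (simp add: integral_distr[OF h fg] integral_distr[OF h f[OF k]] integral_distr[OF h g[OF l]])
qed auto

lemma cov_mat_component:
  fixes \<phi> :: "'x \<Rightarrow> real vec"
  assumes sets: "sets b = sets (PiM \<alpha> M)" and i: "i \<in> \<alpha>"
    and meas: "\<And>k. k < r \<Longrightarrow> (\<lambda>y. \<phi> y $ k) \<in> borel_measurable (M i)"
  shows "cov_mat b (\<lambda>x. \<phi> (x i)) r (\<lambda>x. \<phi> (x i)) r = cov_mat (distr b (M i) (\<lambda>x. x i)) \<phi> r \<phi> r"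
proof (rule cov_mat_distr[OF _ meas meas])
  show "(\<lambda>x. x i) \<in> measurable b (M i)"
    using measurable_component_singleton[OF i, of M] by (subst measurable_cong_sets[OF sets]) auto
qed

section \<open>Similar weights give the same eigenvalues of \<open>\<M>\<close>\<close>

lemma mult_mat_vec_sum:
  assumes D: "(D::'a::comm_semiring_0 mat) \<in> carrier_mat m m" and vs: "\<And>e. e \<in> S \<Longrightarrow> vs e \<in> carrier_vec m"
  shows "vec m (\<lambda>k. \<Sum>e\<in>S. (D *\<^sub>v vs e) $ k) = D *\<^sub>v vec m (\<lambda>l. \<Sum>e\<in>S. vs e $ l)"
proof (rule eq_vecI)
  fix k assume "k < dim_vec (D *\<^sub>v vec m (\<lambda>l. \<Sum>e\<in>S. vs e $ l))"
  hence k: "k < m" using D by auto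
  have "(\<Sum>e\<in>S. (D *\<^sub>v vs e) $ k) = (\<Sum>e\<in>S. \<Sum>l<m. D $$ (k,l) * vs e $ l)"
  proof (rule sum.cong[OF refl])
    fix e assume "e \<in> S"
    hence "dim_vec (vs e) = m" using vs by auto
    thus "(D *\<^sub>v vs e) $ k = (\<Sum>l<m. D $$ (k,l) * vs e $ l)"
      using D k by (simp add: scalar_prod_def atLeast0LessThan row_def)
  qed
  also have "\<dots> = (\<Sum>l<m. D $$ (k,l) * (\<Sum>e\<in>S. vs e $ l))"
    by (subst sum.swap) (simp add: sum_distrib_left)
  also have "\<dots> = (D *\<^sub>v vec m (\<lambda>l. \<Sum>e\<in>S. vs e $ l)) $ k"
    using D k by (simp add: scalar_prod_def atLeast0LessThan row_def)
  finally show "vec m (\<lambda>k. \<Sum>e\<in>S. (D *\<^sub>v vs e) $ k) $ k = (D *\<^sub>v vec m (\<lambda>l. \<Sum>e\<in>S. vs e $ l)) $ k"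
    using k by simp
qed (use D in auto)

lemma feeds_dedgesD:
  assumes "e \<in> dedges F" "e' \<in> dedges F" "feeds e' e"
  shows "fst e \<in> F" "snd e' \<in> fst e" "snd e \<in> fst e" "snd e' \<noteq> snd e"
  using assms unfolding dedges_def feeds_def by auto

lemma M_op_intertwines:
  assumes e: "e \<in> dedges F"
    and D: "\<And>\<alpha> i. \<alpha> \<in> F \<Longrightarrow> i \<in> \<alpha> \<Longrightarrow> D i \<in> carrier_mat (r i) (r i)"
    and w: "\<And>\<alpha> i j. \<alpha> \<in> F \<Longrightarrow> i \<in> \<alpha> \<Longrightarrow> j \<in> \<alpha> \<Longrightarrow> i \<noteq> j \<Longrightarrow> w \<alpha> i j \<in> carrier_mat (r j) (r i)"
    and w': "\<And>\<alpha> i j. \<alpha> \<in> F \<Longrightarrow> i \<in> \<alpha> \<Longrightarrow> j \<in> \<alpha> \<Longrightarrow> i \<noteq> j \<Longrightarrow> w' \<alpha> i j \<in> carrier_mat (r j) (r i)"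
    and intertwine: "\<And>\<alpha> i j. \<alpha> \<in> F \<Longrightarrow> i \<in> \<alpha> \<Longrightarrow> j \<in> \<alpha> \<Longrightarrow> i \<noteq> j \<Longrightarrow>
       w' \<alpha> i j * D i = D j * w \<alpha> i j"
    and f: "\<And>e. e \<in> dedges F \<Longrightarrow> f e \<in> carrier_vec (r (snd e))"
  shows "M_op F r w' (\<lambda>e. D (snd e) *\<^sub>v f e) e = D (snd e) *\<^sub>v M_op F r w f e"
proof -
  let ?S = "{e' \<in> dedges F. feeds e' e}"
  have De: "D (snd e) \<in> carrier_mat (r (snd e)) (r (snd e))" using D e unfolding dedges_def by auto
  have edge: "D (snd e') \<in> carrier_mat (r (snd e')) (r (snd e'))"
    "w (fst e) (snd e') (snd e) \<in> carrier_mat (r (snd e)) (r (snd e'))"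
    "w' (fst e) (snd e') (snd e) \<in> carrier_mat (r (snd e)) (r (snd e'))"
    "w' (fst e) (snd e') (snd e) * D (snd e') = D (snd e) * w (fst e) (snd e') (snd e)"
    "f e' \<in> carrier_vec (r (snd e'))" if "e' \<in> ?S" for e'
  proof -
    from that have e': "e' \<in> dedges F" "feeds e' e" by auto
    note h = feeds_dedgesD[OF e e']
    show "D (snd e') \<in> carrier_mat (r (snd e')) (r (snd e'))" using D[OF h(1,2)] .
    show "w (fst e) (snd e') (snd e) \<in> carrier_mat (r (snd e)) (r (snd e'))" using w[OF h] .
    show "w' (fst e) (snd e') (snd e) \<in> carrier_mat (r (snd e)) (r (snd e'))" using w'[OF h] .
    show "w' (fst e) (snd e') (snd e) * D (snd e') = D (snd e) * w (fst e) (snd e') (snd e)"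
      using intertwine[OF h] .
    show "f e' \<in> carrier_vec (r (snd e'))" using f[OF e'(1)] .
  qed
  have "M_op F r w' (\<lambda>e. D (snd e) *\<^sub>v f e) e
      = vec (r (snd e)) (\<lambda>k. \<Sum>e'\<in>?S. (D (snd e) *\<^sub>v (w (fst e) (snd e') (snd e) *\<^sub>v f e')) $ k)"
    unfolding M_op_def
  proof (intro arg_cong[where f="vec _"] ext sum.cong refl)
    fix k e' assume e': "e' \<in> ?S"
    have "w' (fst e) (snd e') (snd e) *\<^sub>v (D (snd e') *\<^sub>v f e')
        = (w' (fst e) (snd e') (snd e) * D (snd e')) *\<^sub>v f e'"
      using edge(1,3,5)[OF e'] by simp
    also have "\<dots> = D (snd e) *\<^sub>v (w (fst e) (snd e') (snd e) *\<^sub>v f e')"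
      unfolding edge(4)[OF e'] using edge[OF e'] De by simp
    finally show "(w' (fst e) (snd e') (snd e) *\<^sub>v (D (snd e') *\<^sub>v f e')) $ k
        = (D (snd e) *\<^sub>v (w (fst e) (snd e') (snd e) *\<^sub>v f e')) $ k" by simp
  qed
  also have "\<dots> = D (snd e) *\<^sub>v M_op F r w f e"
    unfolding M_op_def
  proof (rule mult_mat_vec_sum[OF De])
    fix e' assume "e' \<in> ?S"
    thus "w (fst e) (snd e') (snd e) *\<^sub>v f e' \<in> carrier_vec (r (snd e))" using edge(2,5)[of e'] by auto
  qed
  finally show ?thesis .
qed

lemma M_eigenvalue_transfer:
  assumes D: "\<And>\<alpha> i. \<alpha> \<in> F \<Longrightarrow> i \<in> \<alpha> \<Longrightarrow> D i \<in> carrier_mat (r i) (r i)"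
    and Dinv: "\<And>\<alpha> i. \<alpha> \<in> F \<Longrightarrow> i \<in> \<alpha> \<Longrightarrow> Dinv i \<in> carrier_mat (r i) (r i)"
    and Dinv_D: "\<And>\<alpha> i. \<alpha> \<in> F \<Longrightarrow> i \<in> \<alpha> \<Longrightarrow> Dinv i * D i = 1\<^sub>m (r i)"
    and w: "\<And>\<alpha> i j. \<alpha> \<in> F \<Longrightarrow> i \<in> \<alpha> \<Longrightarrow> j \<in> \<alpha> \<Longrightarrow> i \<noteq> j \<Longrightarrow> w \<alpha> i j \<in> carrier_mat (r j) (r i)"
    and w': "\<And>\<alpha> i j. \<alpha> \<in> F \<Longrightarrow> i \<in> \<alpha> \<Longrightarrow> j \<in> \<alpha> \<Longrightarrow> i \<noteq> j \<Longrightarrow> w' \<alpha> i j \<in> carrier_mat (r j) (r i)"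
    and intertwine: "\<And>\<alpha> i j. \<alpha> \<in> F \<Longrightarrow> i \<in> \<alpha> \<Longrightarrow> j \<in> \<alpha> \<Longrightarrow> i \<noteq> j \<Longrightarrow>
       w' \<alpha> i j * D i = D j * w \<alpha> i j"
    and ev: "M_eigenvalue F r w z"
  shows "M_eigenvalue F r w' z"
proof -
  obtain f where f: "\<And>e. e \<in> dedges F \<Longrightarrow> f e \<in> carrier_vec (r (snd e))"
    and f_nz: "\<exists>e \<in> dedges F. f e \<noteq> 0\<^sub>v (r (snd e))"
    and f_eig: "\<And>e. e \<in> dedges F \<Longrightarrow> M_op F r w f e = z \<cdot>\<^sub>v f e"
    using ev unfolding M_eigenvalue_def by blast
  have De: "D (snd e) \<in> carrier_mat (r (snd e)) (r (snd e))"
    and Dinv_e: "Dinv (snd e) \<in> carrier_mat (r (snd e)) (r (snd e))"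
    and Dinv_De: "Dinv (snd e) * D (snd e) = 1\<^sub>m (r (snd e))" if "e \<in> dedges F" for e
    using D Dinv Dinv_D that unfolding dedges_def by auto
  define g where "g = (\<lambda>e. D (snd e) *\<^sub>v f e)"
  have "g e \<in> carrier_vec (r (snd e))" if "e \<in> dedges F" for e
    unfolding g_def using De[OF that] f[OF that] by auto
  moreover have "\<exists>e \<in> dedges F. g e \<noteq> 0\<^sub>v (r (snd e))"
  proof -
    obtain e where e: "e \<in> dedges F" "f e \<noteq> 0\<^sub>v (r (snd e))" using f_nz by blast
    have "Dinv (snd e) *\<^sub>v g e = f e"
      unfolding g_def using De[OF e(1)] Dinv_e[OF e(1)] Dinv_De[OF e(1)] f[OF e(1)]
      by (metis assoc_mult_mat_vec one_mult_mat_vec)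
    moreover have "Dinv (snd e) *\<^sub>v 0\<^sub>v (r (snd e)) = 0\<^sub>v (r (snd e))" using Dinv_e[OF e(1)] by auto
    ultimately show ?thesis using e by metis
  qed
  moreover have "M_op F r w' g e = z \<cdot>\<^sub>v g e" if e: "e \<in> dedges F" for e
  proof -
    have "M_op F r w' g e = D (snd e) *\<^sub>v M_op F r w f e"
      unfolding g_def
      by (rule M_op_intertwines[where D = D and w = w and w' = w' and f = f, OF e D w w' intertwine f])
    also have "\<dots> = z \<cdot>\<^sub>v g e"
      unfolding f_eig[OF e] g_def using De[OF e] f[OF e] by (simp add: mult_mat_vec)
    finally show ?thesis .
  qed
  ultimately show ?thesis unfolding M_eigenvalue_def by blast
qed

lemma M_eigenvalue_similar_iff:
  assumes D: "\<And>\<alpha> i. \<alpha> \<in> F \<Longrightarrow> i \<in> \<alpha> \<Longrightarrow> D i \<in> carrier_mat (r i) (r i)"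
    and Dinv: "\<And>\<alpha> i. \<alpha> \<in> F \<Longrightarrow> i \<in> \<alpha> \<Longrightarrow> Dinv i \<in> carrier_mat (r i) (r i)"
    and Dinv_D: "\<And>\<alpha> i. \<alpha> \<in> F \<Longrightarrow> i \<in> \<alpha> \<Longrightarrow> Dinv i * D i = 1\<^sub>m (r i)"
    and D_Dinv: "\<And>\<alpha> i. \<alpha> \<in> F \<Longrightarrow> i \<in> \<alpha> \<Longrightarrow> D i * Dinv i = 1\<^sub>m (r i)"
    and w: "\<And>\<alpha> i j. \<alpha> \<in> F \<Longrightarrow> i \<in> \<alpha> \<Longrightarrow> j \<in> \<alpha> \<Longrightarrow> i \<noteq> j \<Longrightarrow> w \<alpha> i j \<in> carrier_mat (r j) (r i)"
    and w': "\<And>\<alpha> i j. \<alpha> \<in> F \<Longrightarrow> i \<in> \<alpha> \<Longrightarrow> j \<in> \<alpha> \<Longrightarrow> i \<noteq> j \<Longrightarrow> w' \<alpha> i j \<in> carrier_mat (r j) (r i)"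
    and intertwine: "\<And>\<alpha> i j. \<alpha> \<in> F \<Longrightarrow> i \<in> \<alpha> \<Longrightarrow> j \<in> \<alpha> \<Longrightarrow> i \<noteq> j \<Longrightarrow>
       w' \<alpha> i j * D i = D j * w \<alpha> i j"
  shows "M_eigenvalue F r w z \<longleftrightarrow> M_eigenvalue F r w' z"
proof
  show "M_eigenvalue F r w z \<Longrightarrow> M_eigenvalue F r w' z"
    by (rule M_eigenvalue_transfer[OF D Dinv Dinv_D w w' intertwine])
  have "w \<alpha> i j * Dinv i = Dinv j * w' \<alpha> i j"
    if h: "\<alpha> \<in> F" "i \<in> \<alpha>" "j \<in> \<alpha>" "i \<noteq> j" for \<alpha> i j
  proof -
    note c = D[OF h(1,2)] D[OF h(1,3)] Dinv[OF h(1,2)] Dinv[OF h(1,3)] w[OF h] w'[OF h]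
    have "Dinv j * w' \<alpha> i j = Dinv j * (w' \<alpha> i j * (D i * Dinv i))"
      using c D_Dinv[OF h(1,2)] by simp
    also have "\<dots> = Dinv j * ((w' \<alpha> i j * D i) * Dinv i)"
      using c by (simp add: assoc_mult_mat[of "w' \<alpha> i j" "r j" "r i" "D i" "r i" "Dinv i" "r i"])
    also have "\<dots> = Dinv j * (D j * (w \<alpha> i j * Dinv i))"
      unfolding intertwine[OF h] using c by (simp add: assoc_mult_mat[of "D j" "r j" "r j" "w \<alpha> i j" "r i" "Dinv i" "r i"])
    also have "\<dots> = (Dinv j * D j) * (w \<alpha> i j * Dinv i)"
      using c by (simp add: assoc_mult_mat[of "Dinv j" "r j" "r j" "D j" "r j" "w \<alpha> i j * Dinv i" "r i"])
    finally show ?thesis using c Dinv_D[OF h(1,3)] by simp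
  qed
  thus "M_eigenvalue F r w' z \<Longrightarrow> M_eigenvalue F r w z"
    by (intro M_eigenvalue_transfer[OF Dinv D D_Dinv w' w]) auto
qed

section \<open>The weights \<open>u\<close> and \<open>c\<close>\<close>

lemma in_expfam_prob_space_sets:
  "in_expfam \<nu> \<phi> d b \<Longrightarrow> prob_space b \<and> sets b = sets \<nu>"
  unfolding in_expfam_def by auto

lemma in_expfam_factor_sets: "in_expfam_factor \<nu> \<phi>bar s \<alpha> \<phi> r b \<Longrightarrow> sets b = sets \<nu>"
  unfolding in_expfam_factor_def by auto

lemma whitened_mat_intertwines:
  fixes C :: "'a::semiring_1 mat"
  assumes "S \<in> carrier_mat n n" "T \<in> carrier_mat n n" "S' \<in> carrier_mat m m" "T' \<in> carrier_mat m m"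
    and "C \<in> carrier_mat n m" and "S * T = 1\<^sub>m n" and "T' * S' = 1\<^sub>m m"
  shows "T * C * T' * S' = S * (T * T * C)"
proof -
  have "T * C * T' * S' = T * C * (T' * S')" by (rule assoc_mult_mat) (use assms in auto)
  also have "\<dots> = (S * T) * (T * C)" using assms by simp
  also have "\<dots> = S * (T * (T * C))" by (rule assoc_mult_mat) (use assms in auto)
  also have "T * (T * C) = T * T * C" by (rule assoc_mult_mat[symmetric]) (use assms in auto)
  finally show ?thesis .
qed

lemma M_eigenvalue_whitening_iff:
  fixes A :: "'v \<Rightarrow> real mat" and C :: "'v set \<Rightarrow> 'v \<Rightarrow> 'v \<Rightarrow> real mat"
  assumes A: "\<And>\<alpha> i. \<alpha> \<in> F \<Longrightarrow> i \<in> \<alpha> \<Longrightarrow> A i \<in> carrier_mat (r i) (r i)"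
    and A_sym: "\<And>\<alpha> i. \<alpha> \<in> F \<Longrightarrow> i \<in> \<alpha> \<Longrightarrow> transpose_mat (A i) = A i"
    and A_psd: "\<And>\<alpha> i. \<alpha> \<in> F \<Longrightarrow> i \<in> \<alpha> \<Longrightarrow> psd_mat (r i) (A i)"
    and A_inv: "\<And>\<alpha> i. \<alpha> \<in> F \<Longrightarrow> i \<in> \<alpha> \<Longrightarrow> invertible_mat (A i)"
    and C: "\<And>\<alpha> i j. C \<alpha> i j \<in> carrier_mat (r j) (r i)"
    and u: "\<And>\<alpha> i j. \<alpha> \<in> F \<Longrightarrow> i \<in> \<alpha> \<Longrightarrow> j \<in> \<alpha> \<Longrightarrow> i \<noteq> j \<Longrightarrow>
      u \<alpha> i j = map_mat complex_of_real (mat_inv (A j) * C \<alpha> i j)"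
    and c: "\<And>\<alpha> i j. \<alpha> \<in> F \<Longrightarrow> i \<in> \<alpha> \<Longrightarrow> j \<in> \<alpha> \<Longrightarrow> i \<noteq> j \<Longrightarrow>
      c \<alpha> i j = map_mat complex_of_real (inv_sqrt (A j) * C \<alpha> i j * inv_sqrt (A i))"
  shows "M_eigenvalue F r u z \<longleftrightarrow> M_eigenvalue F r c z"
proof -
  let ?h = "map_mat complex_of_real"
  have sqrt: "psd_sqrt (A i) \<in> carrier_mat (r i) (r i)" "inv_sqrt (A i) \<in> carrier_mat (r i) (r i)"
    "psd_sqrt (A i) * inv_sqrt (A i) = 1\<^sub>m (r i)" "inv_sqrt (A i) * psd_sqrt (A i) = 1\<^sub>m (r i)"
    "mat_inv (A i) = inv_sqrt (A i) * inv_sqrt (A i)" if "\<alpha> \<in> F" "i \<in> \<alpha>" for \<alpha> i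
    using psd_sqrt(1)[OF A[OF that] A_sym[OF that] A_psd[OF that]]
      inv_sqrt_of_invertible_psd[OF A[OF that] A_sym[OF that] A_psd[OF that] A_inv[OF that]] by auto
  have hom_sqrt: "?h (psd_sqrt (A i)) \<in> carrier_mat (r i) (r i)" "?h (inv_sqrt (A i)) \<in> carrier_mat (r i) (r i)"
    "?h (inv_sqrt (A i)) * ?h (psd_sqrt (A i)) = 1\<^sub>m (r i)"
    "?h (psd_sqrt (A i)) * ?h (inv_sqrt (A i)) = 1\<^sub>m (r i)" if "\<alpha> \<in> F" "i \<in> \<alpha>" for \<alpha> i
    using sqrt[OF that] of_real_hom.mat_hom_mult[OF sqrt(1,2)[OF that], symmetric]
      of_real_hom.mat_hom_mult[OF sqrt(2,1)[OF that], symmetric]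
    by (simp_all add: of_real_hom.mat_hom_one)
  show ?thesis
  proof (rule M_eigenvalue_similar_iff[where D = "\<lambda>i. ?h (psd_sqrt (A i))" and Dinv = "\<lambda>i. ?h (inv_sqrt (A i))"])
    fix \<alpha> i j assume h: "\<alpha> \<in> F" "i \<in> \<alpha>" "j \<in> \<alpha>" "i \<noteq> j"
    note Ti = sqrt(2)[OF h(1,2)] and Tj = sqrt(2)[OF h(1,3)]
    have u': "u \<alpha> i j = ?h (inv_sqrt (A j)) * ?h (inv_sqrt (A j)) * ?h (C \<alpha> i j)"
      unfolding u[OF h] sqrt(5)[OF h(1,3)]
      by (simp add: of_real_hom.mat_hom_mult[OF mult_carrier_mat[OF Tj Tj] C] of_real_hom.mat_hom_mult[OF Tj Tj])
    have c': "c \<alpha> i j = ?h (inv_sqrt (A j)) * ?h (C \<alpha> i j) * ?h (inv_sqrt (A i))"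
      unfolding c[OF h]
      by (simp add: of_real_hom.mat_hom_mult[OF mult_carrier_mat[OF Tj C] Ti] of_real_hom.mat_hom_mult[OF Tj C])
    note Hi = hom_sqrt[OF h(1,2)] and Hj = hom_sqrt[OF h(1,3)]
    have hC: "?h (C \<alpha> i j) \<in> carrier_mat (r j) (r i)" using C by simp
    show "u \<alpha> i j \<in> carrier_mat (r j) (r i)" unfolding u' using Hj hC by auto
    show "c \<alpha> i j \<in> carrier_mat (r j) (r i)" unfolding c' using Hi Hj hC by auto
    show "c \<alpha> i j * ?h (psd_sqrt (A i)) = ?h (psd_sqrt (A j)) * u \<alpha> i j"
      unfolding u' c' using Hi Hj hC by (intro whitened_mat_intertwines)
  qed (use hom_sqrt in blast)+
qed

theorem lemma1:
  fixes V :: "'v set" and F :: "'v set set"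
    and M :: "'v \<Rightarrow> 'x measure"                     \<comment> \<open>measurable spaces \<open>X_i\<close>\<close>
    and \<nu> :: "'v \<Rightarrow> 'x measure"                     \<comment> \<open>base measures of \<open>E_i\<close>\<close>
    and \<nu>F :: "'v set \<Rightarrow> ('v \<Rightarrow> 'x) measure"       \<comment> \<open>base measures of \<open>E_\<alpha>\<close>\<close>
    and r :: "'v \<Rightarrow> nat" and \<phi> :: "'v \<Rightarrow> 'x \<Rightarrow> real vec"
    and s :: "'v set \<Rightarrow> nat" and \<phi>bar :: "'v set \<Rightarrow> ('v \<Rightarrow> 'x) \<Rightarrow> real vec"
    and bF :: "'v set \<Rightarrow> ('v \<Rightarrow> 'x) measure" and bV :: "'v \<Rightarrow> 'x measure"
    and u c :: "'v set \<Rightarrow> 'v \<Rightarrow> 'v \<Rightarrow> complex mat"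
  assumes hyp: "finite V" "F \<subseteq> Pow V" "finite F"
    and base_i: "\<And>i. i \<in> V \<Longrightarrow> sets (\<nu> i) = sets (M i)"
    and base_F: "\<And>\<alpha>. \<alpha> \<in> F \<Longrightarrow> sets (\<nu>F \<alpha>) = sets (PiM \<alpha> M)"
    and stat_i: "\<And>i x. i \<in> V \<Longrightarrow> \<phi> i x \<in> carrier_vec (r i)"
    and stat_i_meas: "\<And>i k. i \<in> V \<Longrightarrow> k < r i \<Longrightarrow> (\<lambda>x. \<phi> i x $ k) \<in> borel_measurable (M i)"
    and stat_F: "\<And>\<alpha> x. \<alpha> \<in> F \<Longrightarrow> \<phi>bar \<alpha> x \<in> carrier_vec (s \<alpha>)"
    and stat_F_meas: "\<And>\<alpha> k. \<alpha> \<in> F \<Longrightarrow> k < s \<alpha> \<Longrightarrow> (\<lambda>x. \<phi>bar \<alpha> x $ k) \<in> borel_measurable (PiM \<alpha> M)"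
    and mem_i: "\<And>i. i \<in> V \<Longrightarrow> in_expfam (\<nu> i) (\<phi> i) (r i) (bV i)"
    and mem_F: "\<And>\<alpha>. \<alpha> \<in> F \<Longrightarrow> in_expfam_factor (\<nu>F \<alpha>) (\<phi>bar \<alpha>) (s \<alpha>) \<alpha> \<phi> r (bF \<alpha>)"
    and sq_int: "\<And>i k. i \<in> V \<Longrightarrow> k < r i \<Longrightarrow> integrable (bV i) (\<lambda>x. (\<phi> i x $ k)\<^sup>2)"
    and var_inv: "\<And>i. i \<in> V \<Longrightarrow> invertible_mat (cov_mat (bV i) (\<phi> i) (r i) (\<phi> i) (r i))"
    and marg: "\<And>\<alpha> i. \<alpha> \<in> F \<Longrightarrow> i \<in> \<alpha> \<Longrightarrow> distr (bF \<alpha>) (M i) (\<lambda>x. x i) = bV i"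
    and u_def: "\<And>\<alpha> i j. \<alpha> \<in> F \<Longrightarrow> i \<in> \<alpha> \<Longrightarrow> j \<in> \<alpha> \<Longrightarrow> i \<noteq> j \<Longrightarrow>
       u \<alpha> i j = map_mat complex_of_real
         (mat_inv (cov_mat (bV j) (\<phi> j) (r j) (\<phi> j) (r j)) *
          cov_mat (bF \<alpha>) (\<lambda>x. \<phi> j (x j)) (r j) (\<lambda>x. \<phi> i (x i)) (r i))"
    and c_def: "\<And>\<alpha> i j. \<alpha> \<in> F \<Longrightarrow> i \<in> \<alpha> \<Longrightarrow> j \<in> \<alpha> \<Longrightarrow> i \<noteq> j \<Longrightarrow>
       c \<alpha> i j = map_mat complex_of_real
         (inv_sqrt (cov_mat (bF \<alpha>) (\<lambda>x. \<phi> j (x j)) (r j) (\<lambda>x. \<phi> j (x j)) (r j)) *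
          cov_mat (bF \<alpha>) (\<lambda>x. \<phi> j (x j)) (r j) (\<lambda>x. \<phi> i (x i)) (r i) *
          inv_sqrt (cov_mat (bF \<alpha>) (\<lambda>x. \<phi> i (x i)) (r i) (\<lambda>x. \<phi> i (x i)) (r i)))"
  shows "{z. M_eigenvalue F r u z} = {z. M_eigenvalue F r c z}"
proof -
  define A where "A i = cov_mat (bV i) (\<phi> i) (r i) (\<phi> i) (r i)" for i
  define C where "C \<alpha> i j = cov_mat (bF \<alpha>) (\<lambda>x. \<phi> j (x j)) (r j) (\<lambda>x. \<phi> i (x i)) (r i)" for \<alpha> i j
  have vertex: "i \<in> V" if "\<alpha> \<in> F" "i \<in> \<alpha>" for \<alpha> i using that hyp(2) by auto
  have A_psd: "psd_mat (r i) (A i)" if i: "i \<in> V" for i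
  proof -
    have ps: "prob_space (bV i)" and sets: "sets (bV i) = sets (M i)"
      using in_expfam_prob_space_sets[OF mem_i[OF i]] base_i[OF i] by auto
    have "(\<lambda>x. \<phi> i x $ k) \<in> borel_measurable (bV i)" if "k < r i" for k
      using stat_i_meas[OF i that] measurable_cong_sets[OF sets refl] by blast
    thus ?thesis unfolding A_def using cov_mat_self_psd[OF ps _ sq_int[OF i]] by blast
  qed
  have var_factor: "cov_mat (bF \<alpha>) (\<lambda>x. \<phi> i (x i)) (r i) (\<lambda>x. \<phi> i (x i)) (r i) = A i"
    if "\<alpha> \<in> F" "i \<in> \<alpha>" for \<alpha> i
    using cov_mat_component[of "bF \<alpha>" \<alpha> M, OF _ that(2) stat_i_meas[OF vertex[OF that]]]
      in_expfam_factor_sets[OF mem_F[OF that(1)]] base_F[OF that(1)]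
    unfolding marg[OF that] A_def by simp
  have "M_eigenvalue F r u z \<longleftrightarrow> M_eigenvalue F r c z" for z
  proof (rule M_eigenvalue_whitening_iff[where A = A and C = C])
    fix \<alpha> i assume "\<alpha> \<in> F" "i \<in> \<alpha>"
    hence i: "i \<in> V" by (rule vertex)
    show "A i \<in> carrier_mat (r i) (r i)" unfolding A_def cov_mat_def by simp
    show "transpose_mat (A i) = A i" unfolding A_def by (rule cov_mat_self_symmetric)
    show "psd_mat (r i) (A i)" using A_psd[OF i] .
    show "invertible_mat (A i)" unfolding A_def using var_inv[OF i] .
  next
    fix \<alpha> i j
    show "C \<alpha> i j \<in> carrier_mat (r j) (r i)" unfolding C_def cov_mat_def by simp
  next
    fix \<alpha> i j assume h: "\<alpha> \<in> F" "i \<in> \<alpha>" "j \<in> \<alpha>" "i \<noteq> j"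
    show "u \<alpha> i j = map_mat complex_of_real (mat_inv (A j) * C \<alpha> i j)"
      using u_def[OF h] unfolding A_def C_def .
    show "c \<alpha> i j = map_mat complex_of_real (inv_sqrt (A j) * C \<alpha> i j * inv_sqrt (A i))"
      using c_def[OF h] unfolding var_factor[OF h(1,2)] var_factor[OF h(1,3)] C_def .
  qed
  thus ?thesis by auto
qed

end
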